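(* For all $n\ge0$, $r_1,r_2\in(-1,1)$ and $-1<q\le1$, \[ \sum_{s=0}^{n}\genfrac{[}{]}{0pt}{}{n}{s}_{q}r_{1}^{n-s}r_{2}^{s}\frac{(r_{1}^{2})_{s}(r_{1}r_{2})_{s}}{(r_{1}^{2}r_{2}^{2})_{s}}=\frac{w_{n}(0,r_{1},r_{2},q)}{(r_{1}^{2}r_{2}^{2})_{n}}=\phi_{n}(r_{1},r_{2},q). \]
   Context: Notation: $(a)_n=\prod_{j=0}^{n-1}(1-aq^j)$, $(a)_0=1$; $[n]_q=1+\dots+q^{n-1}$, $[0]_q=0$, $[n]_q!=\prod_{j=1}^n[j]_q$, $[0]_q!=1$; $\genfrac{[}{]}{0pt}{}{n}{k}_q=\frac{[n]_q!}{[n-k]_q![k]_q!}$ for $0\le k\le n$, else $0$. $w_n(m,r_1,r_2,q)=\sum_{s=0}^n\genfrac{[}{]}{0pt}{}{n}{s}_q r_1^s(q^mr_2^2)_s\,r_2^{n-s}(q^mr_1^2)_{n-s}$, $\phi_n(r_1,r_2,q)=w_n(0,r_1,r_2,q)/(r_1^2r_2^2)_n$. *)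

theory Defs
  imports Complex_Main
begin

definition qpoch :: "real \<Rightarrow> real \<Rightarrow> nat \<Rightarrow> real" where
  "qpoch q a n = (\<Prod>j<n. 1 - a * q ^ j)"

definition qint :: "real \<Rightarrow> nat \<Rightarrow> real" where
  "qint q n = (\<Sum>j<n. q ^ j)"

definition qfact :: "real \<Rightarrow> nat \<Rightarrow> real" where
  "qfact q n = (\<Prod>j=1..n. qint q j)"

definition qbinom :: "real \<Rightarrow> nat \<Rightarrow> nat \<Rightarrow> real" where
  "qbinom q n k = (if k \<le> n then qfact q n / (qfact q (n - k) * qfact q k) else 0)"

definition w :: "nat \<Rightarrow> nat \<Rightarrow> real \<Rightarrow> real \<Rightarrow> real \<Rightarrow> real" where
  "w n m r1 r2 q = (\<Sum>s=0..n. qbinom q n s * r1 ^ s * qpoch q (q ^ m * r2\<^sup>2) s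
                      * r2 ^ (n - s) * qpoch q (q ^ m * r1\<^sup>2) (n - s))"

definition phi :: "nat \<Rightarrow> real \<Rightarrow> real \<Rightarrow> real \<Rightarrow> real" where
  "phi n r1 r2 q = w n 0 r1 r2 q / qpoch q (r1\<^sup>2 * r2\<^sup>2) n"

end

theory Submission
  imports Defs
begin

text \<open>
  Write x = r1, y = r2, a = r1^2, b = r2^2. Since y^s (xy)_s = prod_{j<s} (y - b x q^j) and
  (ab)_n = (ab)_s (ab q^s)_{n-s}, multiplying the left-hand sum by (ab)_n turns it into
  sum_s [n,s] x^{n-s} (a)_s prod_{j<s} (y - b x q^j) (ab q^s)_{n-s}, while w_n(0,r1,r2,q) is,
  after s |-> n - s, the sum sum_s [n,s] x^{n-s} y^s (a)_s (b)_{n-s}. For arbitrary x, y, a, b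
  both sums F_n(x,a) have F_0 = 1 and, by the q-Pascal rule, obey the same recurrence
  F_{n+1}(x,a) = x (1 - ab q^n) F_n(x,a) + (1 - a)(y - bx) F_n(xq,aq); hence they coincide.
\<close>

lemma qpoch_0 [simp]: "qpoch q a 0 = 1"
  by (simp add: qpoch_def)

lemma qpoch_Suc: "qpoch q a (Suc n) = qpoch q a n * (1 - a * q ^ n)"
  by (simp add: qpoch_def)

lemma qpoch_Suc_shift: "qpoch q a (Suc n) = (1 - a) * qpoch q (a * q) n"
  unfolding qpoch_def by (simp add: prod.lessThan_Suc_shift mult.assoc del: prod.lessThan_Suc)

lemma qpoch_add: "qpoch q a (s + k) = qpoch q a s * qpoch q (a * q ^ s) k"
  by (induction k) (simp_all add: qpoch_Suc power_add mult.assoc)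

lemma qpoch_nonzero:
  assumes "\<bar>a\<bar> < 1" "\<bar>q\<bar> \<le> 1"
  shows "qpoch q a n \<noteq> 0"
proof -
  have "\<bar>a * q ^ j\<bar> < 1" for j
  proof -
    have "\<bar>q\<bar> ^ j \<le> 1" using assms(2) by (simp add: power_le_one)
    then have "\<bar>a * q ^ j\<bar> \<le> \<bar>a\<bar>" by (simp add: abs_mult power_abs mult_left_le)
    with assms(1) show ?thesis by linarith
  qed
  then have "1 - a * q ^ j \<noteq> 0" for j
    by (metis abs_one less_irrefl right_minus_eq)
  then show ?thesis unfolding qpoch_def by simp
qed

text \<open>Equals y^s (c/y)_s for y \<noteq> 0, but stays polynomial at y = 0.\<close>

definition qpoch_hom :: "real \<Rightarrow> real \<Rightarrow> real \<Rightarrow> nat \<Rightarrow> real" where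
  "qpoch_hom q y c s = (\<Prod>j<s. y - c * q ^ j)"

lemma qpoch_hom_Suc_shift: "qpoch_hom q y c (Suc s) = (y - c) * qpoch_hom q y (c * q) s"
  unfolding qpoch_hom_def by (simp add: prod.lessThan_Suc_shift mult.assoc del: prod.lessThan_Suc)

lemma qpoch_hom_mult: "qpoch_hom q y (y * c) s = y ^ s * qpoch q c s"
proof -
  have "y - y * c * q ^ j = y * (1 - c * q ^ j)" for j
    by (simp add: algebra_simps)
  then show ?thesis unfolding qpoch_hom_def qpoch_def by (simp add: mult.assoc prod.distrib)
qed

lemma qint_add: "qint q (m + n) = qint q m + q ^ m * qint q n"
  unfolding qint_def by (induction n) (simp_all add: power_add algebra_simps)

lemma qint_geometric: "(1 - q) * qint q n = 1 - q ^ n"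
proof (induction n)
  case (Suc n)
  have "(1 - q) * qint q (Suc n) = (1 - q) * qint q n + (1 - q) * q ^ n"
    by (simp add: qint_def algebra_simps)
  with Suc show ?case by (simp add: algebra_simps)
qed (simp add: qint_def)

lemma qint_pos:
  assumes "q > -1" "n \<ge> 1"
  shows "qint q n > 0"
proof (cases "q \<ge> 0")
  case True
  have "q ^ 0 \<le> qint q n"
    unfolding qint_def using True assms(2) by (intro member_le_sum) auto
  then show ?thesis by simp
next
  case False
  then have "\<bar>q\<bar> < 1" using assms(1) by auto
  then have "\<bar>q ^ n\<bar> < 1" using assms(2) by (simp add: power_abs power_less_one_iff)
  then have "(1 - q) * qint q n > 0" by (simp add: qint_geometric)
  with False show ?thesis by (simp add: zero_less_mult_iff)
qed

lemma qfact_Suc: "qfact q (Suc n) = qfact q n * qint q (Suc n)"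
  unfolding qfact_def by simp

lemma qfact_nonzero:
  assumes "q > -1"
  shows "qfact q n \<noteq> 0"
  unfolding qfact_def using qint_pos[OF assms] by (simp add: less_imp_neq[symmetric])

lemma qbinom_0:
  assumes "q > -1"
  shows "qbinom q n 0 = 1"
  using qfact_nonzero[OF assms] by (simp add: qbinom_def qfact_def)

lemma qbinom_self:
  assumes "q > -1"
  shows "qbinom q n n = 1"
  using qfact_nonzero[OF assms] by (simp add: qbinom_def qfact_def)

lemma qbinom_symmetric:
  assumes "s \<le> n"
  shows "qbinom q n (n - s) = qbinom q n s"
  using assms by (simp add: qbinom_def mult.commute)

lemma qbinom_Suc_Suc:
  assumes q: "q > -1"
  shows "qbinom q (Suc n) (Suc s) = qbinom q n (Suc s) + q ^ (n - s) * qbinom q n s"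
proof (cases "s < n")
  case True
  then obtain k where n: "n = Suc s + k" using less_iff_Suc_add by auto
  let ?F = "qfact q" and ?I = "qint q"
  have nonzero: "?F n \<noteq> 0" "?F k \<noteq> 0" "?F s \<noteq> 0" "?I (Suc s) \<noteq> 0" "?I (Suc k) \<noteq> 0"
    using qfact_nonzero[OF q] qint_pos[OF q] by (auto simp: less_imp_neq[symmetric])
  have "Suc n = Suc k + Suc s" using n by simp
  then have "?I (Suc n) = ?I (Suc k) + q ^ Suc k * ?I (Suc s)"
    by (simp only: qint_add)
  moreover have "n - s = Suc k" "Suc n - Suc s = Suc k" "n - Suc s = k" using n by auto
  ultimately show ?thesis
    using nonzero n by (simp add: qbinom_def qfact_Suc field_simps add_ac)
next
  case False
  then show ?thesis
    by (cases "s = n") (simp_all add: qbinom_self[OF q] qbinom_def qfact_nonzero[OF q])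
qed

lemma sum_qbinom_Suc:
  assumes q: "q > -1"
  shows "(\<Sum>s=0..Suc n. qbinom q (Suc n) s * f s)
     = (\<Sum>s=0..n. qbinom q n s * f s) + (\<Sum>s=0..n. q ^ (n - s) * qbinom q n s * f (Suc s))"
proof -
  have "(\<Sum>s=0..n. qbinom q n s * f s) = (\<Sum>s=0..Suc n. qbinom q n s * f s)"
    by (simp add: qbinom_def)
  also have "\<dots> = f 0 + (\<Sum>s=0..n. qbinom q n (Suc s) * f (Suc s))"
    by (subst sum.atLeast0_atMost_Suc_shift) (simp add: qbinom_0[OF q])
  finally show ?thesis
    by (subst sum.atLeast0_atMost_Suc_shift)
      (simp add: qbinom_0[OF q] qbinom_Suc_Suc[OF q] distrib_right sum.distrib mult.assoc)
qed

definition qbinom_hom_sum :: "real \<Rightarrow> nat \<Rightarrow> real \<Rightarrow> real \<Rightarrow> real \<Rightarrow> real \<Rightarrow> real" where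
  "qbinom_hom_sum q n x y a b = (\<Sum>s=0..n. qbinom q n s * x ^ (n - s) * qpoch q a s
     * qpoch_hom q y (b * x) s * qpoch q (a * b * q ^ s) (n - s))"

definition qbinom_poch_sum :: "real \<Rightarrow> nat \<Rightarrow> real \<Rightarrow> real \<Rightarrow> real \<Rightarrow> real \<Rightarrow> real" where
  "qbinom_poch_sum q n x y a b = (\<Sum>s=0..n. qbinom q n s * x ^ (n - s) * y ^ s
     * qpoch q a s * qpoch q b (n - s))"

lemma qbinom_hom_sum_Suc:
  assumes q: "q > -1"
  shows "qbinom_hom_sum q (Suc n) x y a b = x * (1 - a * b * q ^ n) * qbinom_hom_sum q n x y a b
          + (1 - a) * (y - b * x) * qbinom_hom_sum q n (x * q) y (a * q) b"
proof -
  define f where "f s = x ^ (Suc n - s) * qpoch q a s * qpoch_hom q y (b * x) s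
    * qpoch q (a * b * q ^ s) (Suc n - s)" for s
  have "qbinom_hom_sum q (Suc n) x y a b = (\<Sum>s=0..Suc n. qbinom q (Suc n) s * f s)"
    by (simp add: qbinom_hom_sum_def f_def mult.assoc)
  also have "\<dots> = (\<Sum>s=0..n. qbinom q n s * f s) + (\<Sum>s=0..n. q ^ (n - s) * qbinom q n s * f (Suc s))"
    by (rule sum_qbinom_Suc[OF q])
  also have "(\<Sum>s=0..n. qbinom q n s * f s) = x * (1 - a * b * q ^ n) * qbinom_hom_sum q n x y a b"
    unfolding qbinom_hom_sum_def sum_distrib_left
  proof (intro sum.cong refl)
    fix s assume "s \<in> {0..n}"
    then have "Suc n - s = Suc (n - s)" "q ^ s * q ^ (n - s) = q ^ n"
      by (auto simp: power_add[symmetric])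
    then show "qbinom q n s * f s = x * (1 - a * b * q ^ n) * (qbinom q n s * x ^ (n - s) * qpoch q a s
     * qpoch_hom q y (b * x) s * qpoch q (a * b * q ^ s) (n - s))"
      unfolding f_def by (simp add: qpoch_Suc algebra_simps)
  qed
  also have "(\<Sum>s=0..n. q ^ (n - s) * qbinom q n s * f (Suc s))
    = (1 - a) * (y - b * x) * qbinom_hom_sum q n (x * q) y (a * q) b"
    unfolding qbinom_hom_sum_def sum_distrib_left
    by (intro sum.cong refl)
      (simp add: f_def qpoch_Suc_shift qpoch_hom_Suc_shift power_mult_distrib algebra_simps)
  finally show ?thesis .
qed

lemma qbinom_poch_sum_Suc:
  assumes q: "q > -1"
  shows "qbinom_poch_sum q (Suc n) x y a b = x * (1 - a * b * q ^ n) * qbinom_poch_sum q n x y a b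
          + (1 - a) * (y - b * x) * qbinom_poch_sum q n (x * q) y (a * q) b"
proof -
  define f where "f s = x ^ (Suc n - s) * y ^ s * qpoch q a s * qpoch q b (Suc n - s)" for s
  have "qbinom_poch_sum q (Suc n) x y a b = (\<Sum>s=0..Suc n. qbinom q (Suc n) s * f s)"
    by (simp add: qbinom_poch_sum_def f_def mult.assoc)
  also have "\<dots> = (\<Sum>s=0..n. qbinom q n s * f s) + (\<Sum>s=0..n. q ^ (n - s) * qbinom q n s * f (Suc s))"
    by (rule sum_qbinom_Suc[OF q])
  also have "(\<Sum>s=0..n. qbinom q n s * f s) = x * (1 - a * b * q ^ n) * qbinom_poch_sum q n x y a b
      - (1 - a) * b * x * qbinom_poch_sum q n (x * q) y (a * q) b"
    unfolding qbinom_poch_sum_def sum_distrib_left sum_subtractf[symmetric]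
  proof (intro sum.cong refl)
    fix s assume "s \<in> {0..n}"
    then have "Suc n - s = Suc (n - s)" and q_pow: "q ^ (n - s) * q ^ s = q ^ n"
      by (auto simp: power_add[symmetric])
    let ?t = "qbinom q n s * x ^ (n - s) * y ^ s * qpoch q a s * qpoch q b (n - s)"
    have "(1 - a) * b * x * (qbinom q n s * (x * q) ^ (n - s) * y ^ s * qpoch q (a * q) s * qpoch q b (n - s))
      = b * x * q ^ (n - s) * (qbinom q n s * x ^ (n - s) * y ^ s * qpoch q b (n - s))
          * ((1 - a) * qpoch q (a * q) s)"
      by (simp add: power_mult_distrib ac_simps)
    also have "\<dots> = b * x * q ^ (n - s) * (1 - a * q ^ s) * ?t"
      unfolding qpoch_Suc_shift[symmetric] qpoch_Suc by (simp add: ac_simps)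
    finally have shifted: "(1 - a) * b * x * (qbinom q n s * (x * q) ^ (n - s) * y ^ s * qpoch q (a * q) s
      * qpoch q b (n - s)) = b * x * q ^ (n - s) * (1 - a * q ^ s) * ?t" .
    show "qbinom q n s * f s = x * (1 - a * b * q ^ n) * ?t
      - (1 - a) * b * x * (qbinom q n s * (x * q) ^ (n - s) * y ^ s * qpoch q (a * q) s * qpoch q b (n - s))"
      unfolding shifted f_def q_pow[symmetric] \<open>Suc n - s = Suc (n - s)\<close>
      by (simp add: qpoch_Suc algebra_simps)
  qed
  also have "(\<Sum>s=0..n. q ^ (n - s) * qbinom q n s * f (Suc s))
    = (1 - a) * y * qbinom_poch_sum q n (x * q) y (a * q) b"
    unfolding qbinom_poch_sum_def sum_distrib_left
    by (intro sum.cong refl) (simp add: f_def qpoch_Suc_shift power_mult_distrib algebra_simps)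
  finally show ?thesis by (simp add: algebra_simps)
qed

lemma qbinom_hom_sum_eq_poch_sum:
  assumes q: "q > -1"
  shows "qbinom_hom_sum q n x y a b = qbinom_poch_sum q n x y a b"
proof (induction n arbitrary: x a)
  case 0
  show ?case
    using qbinom_0[OF q, of 0] by (simp add: qbinom_hom_sum_def qbinom_poch_sum_def qpoch_hom_def)
next
  case (Suc n)
  then show ?case by (simp add: qbinom_hom_sum_Suc[OF q] qbinom_poch_sum_Suc[OF q])
qed

lemma w_0_eq_qbinom_poch_sum: "w n 0 x y q = qbinom_poch_sum q n x y (x\<^sup>2) (y\<^sup>2)"
proof -
  have "w n 0 x y q = (\<Sum>s=0..n. qbinom q n (n - s) * x ^ (n - s) * qpoch q (y\<^sup>2) (n - s)
      * y ^ (n - (n - s)) * qpoch q (x\<^sup>2) (n - (n - s)))"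
    unfolding w_def by (subst sum.atLeastAtMost_rev) simp
  also have "\<dots> = qbinom_poch_sum q n x y (x\<^sup>2) (y\<^sup>2)"
    unfolding qbinom_poch_sum_def by (intro sum.cong refl) (simp add: qbinom_symmetric)
  finally show ?thesis .
qed

lemma sum_qpoch_ratio_eq_qbinom_hom_sum:
  assumes "qpoch q (a * y\<^sup>2) n \<noteq> 0"
  shows "(\<Sum>s=0..n. qbinom q n s * x ^ (n - s) * y ^ s *
            (qpoch q a s * qpoch q (x * y) s) / qpoch q (a * y\<^sup>2) s)
         = qbinom_hom_sum q n x y a (y\<^sup>2) / qpoch q (a * y\<^sup>2) n"
  unfolding qbinom_hom_sum_def sum_divide_distrib
proof (intro sum.cong refl)
  fix s assume "s \<in> {0..n}"
  then have split: "qpoch q (a * y\<^sup>2) n = qpoch q (a * y\<^sup>2) s * qpoch q (a * y\<^sup>2 * q ^ s) (n - s)"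
    by (metis qpoch_add le_add_diff_inverse atLeastAtMost_iff)
  with assms have "qpoch q (a * y\<^sup>2) s \<noteq> 0" "qpoch q (a * y\<^sup>2 * q ^ s) (n - s) \<noteq> 0"
    by auto
  moreover have "qpoch_hom q y (y\<^sup>2 * x) s = y ^ s * qpoch q (x * y) s"
    using qpoch_hom_mult[of q y "x * y" s] by (simp add: power2_eq_square ac_simps)
  ultimately show "qbinom q n s * x ^ (n - s) * y ^ s * (qpoch q a s * qpoch q (x * y) s)
      / qpoch q (a * y\<^sup>2) s
    = qbinom q n s * x ^ (n - s) * qpoch q a s * qpoch_hom q y (y\<^sup>2 * x) s
      * qpoch q (a * y\<^sup>2 * q ^ s) (n - s) / qpoch q (a * y\<^sup>2) n"
    unfolding split by (simp add: field_simps)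
qed

theorem mainTheorem7:
  fixes n :: nat and r1 r2 q :: real
  assumes "-1 < r1" "r1 < 1" "-1 < r2" "r2 < 1" "-1 < q" "q \<le> 1"
  shows "(\<Sum>s=0..n. qbinom q n s * r1 ^ (n - s) * r2 ^ s *
            (qpoch q (r1\<^sup>2) s * qpoch q (r1 * r2) s) / qpoch q (r1\<^sup>2 * r2\<^sup>2) s)
           = w n 0 r1 r2 q / qpoch q (r1\<^sup>2 * r2\<^sup>2) n
         \<and> w n 0 r1 r2 q / qpoch q (r1\<^sup>2 * r2\<^sup>2) n = phi n r1 r2 q"
proof
  have "\<bar>r1\<bar> * \<bar>r2\<bar> < 1 * 1"
    using assms(1-4) by (intro abs_mult_less) auto
  then have "\<bar>r1\<^sup>2 * r2\<^sup>2\<bar> < 1"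
    by (simp add: abs_mult abs_square_less_1 power_mult_distrib[symmetric])
  then have "qpoch q (r1\<^sup>2 * r2\<^sup>2) n \<noteq> 0"
    using assms(5,6) by (intro qpoch_nonzero) auto
  then show "(\<Sum>s=0..n. qbinom q n s * r1 ^ (n - s) * r2 ^ s *
            (qpoch q (r1\<^sup>2) s * qpoch q (r1 * r2) s) / qpoch q (r1\<^sup>2 * r2\<^sup>2) s)
           = w n 0 r1 r2 q / qpoch q (r1\<^sup>2 * r2\<^sup>2) n"
    using assms(5) by (simp add: sum_qpoch_ratio_eq_qbinom_hom_sum qbinom_hom_sum_eq_poch_sum
        w_0_eq_qbinom_poch_sum)
qed (simp add: phi_def)

end
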